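(* Let $p\in(1,\infty)$ be such that $\gamma_{p,w}:=\gamma\, n^{1/p}(w_{\max}/w_{\min})^{1/p}<1$, let $Q^*_\lambda$ be the unique fixed point of $F_\lambda$, and let $\theta^*_p:=\arg\min_{\theta\in\mathbb{R}^d} f_p(\theta)$, where $f_p(\theta)=\frac1p\|F_\lambda(\Phi\theta)-\Phi\theta\|_{p,w}^p$. Then \[ \|Q_{\theta^*_p}-Q^*_\lambda\|_{p,w}\le\frac{1+\gamma_{p,w}}{1-\gamma_{p,w}}\min_{\theta\in\mathbb{R}^d}\|Q_\theta-Q^*_\lambda\|_{p,w}. \]
   Context: Finite discounted MDP with state space $\mathcal S$, action space $\mathcal A$, transition probabilities $P(s'\mid s,a)$, expected reward $R(s,a)$, discount $\gamma\in[0,1)$; $n=|\mathcal S||\mathcal A|$ and Q-functions are vectors in $\mathbb{R}^n$ indexed by $(s,a)$. For $\lambda>0$, $(F_\lambda Q)(s,a) := R(s,a)+\gamma\sum_{s'}P(s'\mid s,a)\,\lambda\ln\big(\sum_{u\in\mathcal A}\exp(Q(s',u)/\lambda)\big)$. Weights $w_i>0$ with $\sum_i w_i=1$, $\|x\|_{p,w}=(\sum_i w_i|x_i|^p)^{1/p}$, $w_{\min}=\min_i w_i$, $w_{\max}=\max_i w_i$. $\Phi\in\mathbb{R}^{n\times d}$ is a full-rank feature matrix and $Q_\theta=\Phi\theta$. When $\gamma_{p,w}<1$, $F_\lambda$ is a contraction in $\|\cdot\|_{p,w}$ with unique fixed point $Q^*_\lambda$. *)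

theory Defs
  imports "HOL-Analysis.Analysis"
begin

definition soft_bellman ::
  "('s::finite \<Rightarrow> 'a::finite \<Rightarrow> 's \<Rightarrow> real) \<Rightarrow> ('s \<Rightarrow> 'a \<Rightarrow> real) \<Rightarrow> real \<Rightarrow> real
    \<Rightarrow> ('s \<times> 'a \<Rightarrow> real) \<Rightarrow> ('s \<times> 'a \<Rightarrow> real)" where
  "soft_bellman P R \<gamma> lam Q = (\<lambda>(s,a). R s a + \<gamma> * (\<Sum>s'\<in>UNIV. P s a s' *
      (lam * ln (\<Sum>u\<in>UNIV. exp (Q (s',u) / lam)))))"

definition wnorm :: "real \<Rightarrow> ('i::finite \<Rightarrow> real) \<Rightarrow> ('i \<Rightarrow> real) \<Rightarrow> real" where
  "wnorm p w x = (\<Sum>i\<in>UNIV. w i * \<bar>x i\<bar> powr p) powr (1 / p)"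

definition linQ :: "('i::finite \<Rightarrow> 'd::finite \<Rightarrow> real) \<Rightarrow> ('d \<Rightarrow> real) \<Rightarrow> ('i \<Rightarrow> real)" where
  "linQ \<Phi> \<theta> = (\<lambda>i. \<Sum>j\<in>UNIV. \<Phi> i j * \<theta> j)"

definition gamma_pw :: "real \<Rightarrow> real \<Rightarrow> ('i::finite \<Rightarrow> real) \<Rightarrow> real" where
  "gamma_pw \<gamma> p w = \<gamma> * real CARD('i) powr (1/p) * (Max (range w) / Min (range w)) powr (1/p)"

definition f_obj where
  "f_obj P R \<gamma> lam p w \<Phi> \<theta> =
     (1/p) * wnorm p w (\<lambda>i. soft_bellman P R \<gamma> lam (linQ \<Phi> \<theta>) i - linQ \<Phi> \<theta> i) powr p"

end

theory Submission
  imports Defs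
begin

text \<open>Log-sum-exp is monotone and commutes with adding constants, so it is 1-Lipschitz for the
  sup norm, and averaging over the stochastic kernel \<open>P\<close> makes the soft Bellman operator \<open>F\<close> a
  \<open>\<gamma>\<close>-contraction in the sup norm. As \<open>w_min^(1/p) * sup |x| \<le> wnorm p w x \<le> sup |x|\<close>, it is a
  \<open>gamma_pw\<close>-contraction for the weighted p-norm. For a \<open>k\<close>-contraction \<open>F\<close> with fixed point \<open>Q*\<close>,
  the triangle inequality through \<open>F Q\<close> and \<open>F Q* = Q*\<close> gives
  \<open>(1 - k) d(Q, Q*) \<le> d(F Q, Q) \<le> (1 + k) d(Q, Q*)\<close> in any metric, and \<open>\<theta>*\<close> minimises the middle
  term over the range of \<open>\<Phi>\<close>.\<close>

lemma powr_le_imp_le_base: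
  fixes a x y :: real
  assumes "0 < a" "0 \<le> y" "x powr a \<le> y powr a"
  shows "x \<le> y"
  using powr_less_mono2[OF assms(1,2), of x] assms(3) by linarith

lemma convex_on_powr_nonneg:
  assumes p: "1 \<le> p"
  shows "convex_on {0..} (\<lambda>x::real. x powr p)"
proof
  have powr_le_self: "s powr p \<le> s" if "0 \<le> s" "s \<le> 1" for s :: real
    using powr_mono'[of 1 p s] that p by simp
  fix t x y :: real
  assume t: "0 < t" "t < 1" and xy: "x \<in> {0..}" "y \<in> {0..}"
  consider "x = 0" | "y = 0" | "x > 0" "y > 0"
    using xy by fastforce
  then show "((1 - t) *\<^sub>R x + t *\<^sub>R y) powr p \<le> (1 - t) * x powr p + t * y powr p"
  proof cases
    case 1
    then show ?thesis
      using powr_le_self[of t] t xy by (simp add: powr_mult mult_right_mono)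
  next
    case 2
    then show ?thesis
      using powr_le_self[of "1 - t"] t xy by (simp add: powr_mult mult_right_mono)
  next
    case 3
    then show ?thesis
      using convex_onD[OF powr_convex[OF p], of t x y] t by simp
  qed
qed simp

text \<open>Convexity of \<open>powr p\<close> at \<open>\<bar>u\<bar>/a\<close> and \<open>\<bar>v\<bar>/b\<close> with weights \<open>a/(a+b)\<close> and \<open>b/(a+b)\<close>: summed with
  \<open>a, b\<close> the two norms, this is Minkowski's inequality.\<close>

lemma abs_add_powr_le_convex:
  fixes u v a b p :: real
  assumes "0 < a" "0 < b" "1 \<le> p"
  shows "\<bar>u + v\<bar> powr p
           \<le> (a + b) powr p * (a / (a + b) * (\<bar>u\<bar> / a) powr p + b / (a + b) * (\<bar>v\<bar> / b) powr p)"
proof -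
  define t where "t = b / (a + b)"
  have t: "0 \<le> t" "t \<le> 1" "1 - t = a / (a + b)"
    using assms by (auto simp: t_def field_simps)
  have "(a + b) * ((1 - t) * (\<bar>u\<bar> / a) + t * (\<bar>v\<bar> / b)) = \<bar>u\<bar> + \<bar>v\<bar>"
    unfolding t(3) using assms by (simp add: t_def distrib_left)
  then have "\<bar>u + v\<bar> powr p \<le> ((a + b) * ((1 - t) * (\<bar>u\<bar> / a) + t * (\<bar>v\<bar> / b))) powr p"
    using assms by (intro powr_mono2) (auto simp: abs_triangle_ineq)
  also have "\<dots> \<le> (a + b) powr p * ((1 - t) * (\<bar>u\<bar> / a) powr p + t * (\<bar>v\<bar> / b) powr p)"
    using convex_onD[OF convex_on_powr_nonneg[OF assms(3)], of t "\<bar>u\<bar> / a" "\<bar>v\<bar> / b"] assms t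
    by (simp add: powr_mult mult_left_mono)
  finally show ?thesis
    unfolding t_def[symmetric] t(3)[symmetric] .
qed

lemma wnorm_nonneg: "0 \<le> wnorm p w x"
  by (simp add: wnorm_def)

lemma wnorm_powr:
  assumes "\<And>i. 0 \<le> w i" "0 < p"
  shows "wnorm p w x powr p = (\<Sum>i\<in>UNIV. w i * \<bar>x i\<bar> powr p)"
  using assms by (simp add: wnorm_def powr_powr sum_nonneg)

lemma wnorm_eq_0_iff:
  assumes "\<And>i. 0 < w i" "0 < p"
  shows "wnorm p w x = 0 \<longleftrightarrow> x = (\<lambda>_. 0)"
proof -
  have "wnorm p w x = 0 \<longleftrightarrow> (\<Sum>i\<in>UNIV. w i * \<bar>x i\<bar> powr p) = 0"
    using wnorm_powr[of w p x] assms by (auto simp: less_imp_le)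
  also have "\<dots> \<longleftrightarrow> (\<forall>i. w i * \<bar>x i\<bar> powr p = 0)"
    using assms by (simp add: sum_nonneg_eq_0_iff less_imp_le)
  also have "\<dots> \<longleftrightarrow> x = (\<lambda>_. 0)"
    using assms by (auto simp: fun_eq_iff less_imp_neq[symmetric])
  finally show ?thesis .
qed

lemma abs_le_wnorm:
  assumes "\<And>i. 0 \<le> w i" "0 < p"
  shows "w i powr (1/p) * \<bar>x i\<bar> \<le> wnorm p w x"
proof -
  have "w i * \<bar>x i\<bar> powr p \<le> (\<Sum>j\<in>UNIV. w j * \<bar>x j\<bar> powr p)"
    by (rule member_le_sum) (use assms in auto)
  then have "(w i * \<bar>x i\<bar> powr p) powr (1/p) \<le> (\<Sum>j\<in>UNIV. w j * \<bar>x j\<bar> powr p) powr (1/p)"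
    using assms by (intro powr_mono2) auto
  then show ?thesis
    using assms by (simp add: wnorm_def powr_mult powr_powr)
qed

lemma wnorm_le_sup:
  assumes "\<And>i. 0 \<le> w i" "(\<Sum>i\<in>UNIV. w i) = 1" "0 < p" "\<And>i. \<bar>x i\<bar> \<le> c"
  shows "wnorm p w x \<le> c"
proof -
  have c: "0 \<le> c"
    using assms(4)[of undefined] by linarith
  have "(\<Sum>i\<in>UNIV. w i * \<bar>x i\<bar> powr p) \<le> (\<Sum>i\<in>UNIV. w i * c powr p)"
    using assms by (intro sum_mono mult_left_mono powr_mono2) auto
  also have "\<dots> = c powr p"
    using assms(2) by (simp add: sum_distrib_right[symmetric])
  finally have "(\<Sum>i\<in>UNIV. w i * \<bar>x i\<bar> powr p) powr (1/p) \<le> (c powr p) powr (1/p)"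
    using assms by (intro powr_mono2) (auto intro!: sum_nonneg)
  then show ?thesis
    using assms(3) c by (simp add: wnorm_def powr_powr)
qed

lemma wnorm_triangle:
  assumes w: "\<And>i. 0 < w i" and p: "1 \<le> p"
  shows "wnorm p w (\<lambda>i. x i + y i) \<le> wnorm p w x + wnorm p w y"
proof -
  define a b where "a = wnorm p w x" and "b = wnorm p w y"
  have w0: "0 \<le> w i" for i
    using w less_imp_le by blast
  have p0: "0 < p"
    using p by simp
  show ?thesis
  proof (cases "a = 0 \<or> b = 0")
    case True
    then have "x = (\<lambda>_. 0) \<or> y = (\<lambda>_. 0)"
      using wnorm_eq_0_iff[of w p, OF w p0] by (auto simp: a_def b_def)
    then show ?thesis
      using wnorm_nonneg by auto
  next
    case False
    then have a: "0 < a" and b: "0 < b"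
      using wnorm_nonneg a_def b_def by (metis less_eq_real_def)+
    have unit: "(\<Sum>i\<in>UNIV. w i * (\<bar>z i\<bar> / wnorm p w z) powr p) = 1" if "0 < wnorm p w z" for z
    proof -
      have "(\<Sum>i\<in>UNIV. w i * (\<bar>z i\<bar> / wnorm p w z) powr p)
          = (\<Sum>i\<in>UNIV. w i * \<bar>z i\<bar> powr p) / wnorm p w z powr p"
        using that by (simp add: powr_divide sum_divide_distrib)
      also have "\<dots> = 1"
        using that wnorm_powr[of w p z] w0 p0 by (metis divide_self powr_gt_zero less_irrefl)
      finally show ?thesis .
    qed
    have "(\<Sum>i\<in>UNIV. w i * \<bar>x i + y i\<bar> powr p)
        \<le> (\<Sum>i\<in>UNIV. w i * ((a + b) powr p
              * (a / (a + b) * (\<bar>x i\<bar> / a) powr p + b / (a + b) * (\<bar>y i\<bar> / b) powr p)))"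
      using w0 a b p by (intro sum_mono mult_left_mono abs_add_powr_le_convex)
    also have "\<dots> = (a + b) powr p * (a / (a + b) * (\<Sum>i\<in>UNIV. w i * (\<bar>x i\<bar> / a) powr p)
        + b / (a + b) * (\<Sum>i\<in>UNIV. w i * (\<bar>y i\<bar> / b) powr p))"
      by (simp add: sum_distrib_left sum.distrib distrib_left mult.left_commute)
    also have "\<dots> = (a + b) powr p"
      using unit[of x] unit[of y] a b by (simp add: a_def b_def add_divide_distrib[symmetric])
    finally have "wnorm p w (\<lambda>i. x i + y i) powr p \<le> (a + b) powr p"
      using wnorm_powr[of w p, OF w0 p0] by simp
    then have "wnorm p w (\<lambda>i. x i + y i) \<le> a + b"
      using a b by (metis powr_le_imp_le_base[OF p0] add_pos_pos less_imp_le)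
    then show ?thesis
      by (simp only: a_def b_def)
  qed
qed

definition wdist :: "real \<Rightarrow> ('i::finite \<Rightarrow> real) \<Rightarrow> ('i \<Rightarrow> real) \<Rightarrow> ('i \<Rightarrow> real) \<Rightarrow> real" where
  "wdist p w x y = wnorm p w (\<lambda>i. x i - y i)"

lemma Metric_space_wdist:
  fixes w :: "'i::finite \<Rightarrow> real"
  assumes "\<And>i. 0 < w i" "1 \<le> p"
  shows "Metric_space UNIV (wdist p w)"
proof
  fix x y z :: "'i \<Rightarrow> real"
  show "0 \<le> wdist p w x y"
    by (simp add: wdist_def wnorm_nonneg)
  show "wdist p w x y = wdist p w y x"
    by (simp add: wdist_def wnorm_def abs_minus_commute)
  show "wdist p w x y = 0 \<longleftrightarrow> x = y"
    using wnorm_eq_0_iff[of w p "\<lambda>i. x i - y i"] assms by (simp add: wdist_def fun_eq_iff)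
  show "wdist p w x z \<le> wdist p w x y + wdist p w y z"
    using wnorm_triangle[of w p "\<lambda>i. x i - y i" "\<lambda>i. y i - z i"] assms by (simp add: wdist_def)
qed

lemma (in Metric_space) residual_minimizer_dist_le:
  assumes contraction: "\<And>x y. x \<in> M \<Longrightarrow> y \<in> M \<Longrightarrow> d (F x) (F y) \<le> k * d x y"
    and "F ` M \<subseteq> M" "k < 1" "q \<in> M" "F q = q" "S \<subseteq> M" "x\<^sub>0 \<in> S"
    and minimal: "\<And>x. x \<in> S \<Longrightarrow> d (F x\<^sub>0) x\<^sub>0 \<le> d (F x) x"
    and "x \<in> S"
  shows "d x\<^sub>0 q \<le> (1 + k) / (1 - k) * d x q"
proof -
  have in_M: "x\<^sub>0 \<in> M" "x \<in> M" "F x\<^sub>0 \<in> M" "F x \<in> M"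
    using assms by blast+
  have "d x\<^sub>0 q \<le> d x\<^sub>0 (F x\<^sub>0) + d (F x\<^sub>0) (F q)"
    using triangle in_M assms by simp
  also have "\<dots> \<le> d (F x\<^sub>0) x\<^sub>0 + k * d x\<^sub>0 q"
    using contraction[of x\<^sub>0 q] in_M assms commute by simp
  finally have "(1 - k) * d x\<^sub>0 q \<le> d (F x\<^sub>0) x\<^sub>0"
    by (simp add: algebra_simps)
  also have "\<dots> \<le> d (F x) x"
    using minimal \<open>x \<in> S\<close> .
  also have "\<dots> \<le> d (F x) (F q) + d q x"
    using triangle in_M assms by simp
  also have "\<dots> \<le> (1 + k) * d x q"
    using contraction[of x q] in_M assms commute by (simp add: algebra_simps)
  finally show ?thesis
    using \<open>k < 1\<close> by (simp add: field_simps)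
qed

definition log_sum_exp :: "real \<Rightarrow> ('a::finite \<Rightarrow> real) \<Rightarrow> real" where
  "log_sum_exp lam f = lam * ln (\<Sum>u\<in>UNIV. exp (f u / lam))"

lemma log_sum_exp_mono:
  assumes "0 < lam" "\<And>u. f u \<le> g u"
  shows "log_sum_exp lam f \<le> log_sum_exp lam g"
proof -
  have "(\<Sum>u\<in>UNIV. exp (f u / lam)) \<le> (\<Sum>u\<in>UNIV. exp (g u / lam))"
    using assms by (intro sum_mono) (simp add: divide_right_mono)
  then show ?thesis
    using assms(1) by (simp add: log_sum_exp_def sum_pos)
qed

lemma log_sum_exp_add_const:
  assumes "0 < lam"
  shows "log_sum_exp lam (\<lambda>u. f u + c) = log_sum_exp lam f + c"
proof -
  have "(\<Sum>u\<in>UNIV. exp ((f u + c) / lam)) = exp (c / lam) * (\<Sum>u\<in>UNIV. exp (f u / lam))"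
    by (simp add: add_divide_distrib exp_add sum_distrib_left mult.commute)
  moreover have "0 < (\<Sum>u\<in>UNIV. exp (f u / lam))"
    by (intro sum_pos) auto
  ultimately show ?thesis
    using assms by (simp add: log_sum_exp_def ln_mult distrib_left)
qed

lemma abs_log_sum_exp_diff_le:
  assumes "0 < lam" "\<And>u. \<bar>f u - g u\<bar> \<le> c"
  shows "\<bar>log_sum_exp lam f - log_sum_exp lam g\<bar> \<le> c"
proof -
  have "f u \<le> g u + c" "g u \<le> f u + c" for u
    using assms(2)[of u] by linarith+
  then have "log_sum_exp lam f \<le> log_sum_exp lam (\<lambda>u. g u + c)"
    "log_sum_exp lam g \<le> log_sum_exp lam (\<lambda>u. f u + c)"
    using assms(1) by (auto intro!: log_sum_exp_mono)
  then show ?thesis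
    using assms(1) by (simp add: log_sum_exp_add_const)
qed

lemma abs_stochastic_sum_le:
  fixes q f :: "'a \<Rightarrow> real"
  assumes "finite A" "\<And>x. x \<in> A \<Longrightarrow> 0 \<le> q x" "(\<Sum>x\<in>A. q x) = 1"
    and "\<And>x. x \<in> A \<Longrightarrow> \<bar>f x\<bar> \<le> c"
  shows "\<bar>\<Sum>x\<in>A. q x * f x\<bar> \<le> c"
proof -
  have "\<bar>\<Sum>x\<in>A. q x * f x\<bar> \<le> (\<Sum>x\<in>A. \<bar>q x * f x\<bar>)"
    by (rule sum_abs)
  also have "\<dots> \<le> (\<Sum>x\<in>A. q x * c)"
    using assms by (intro sum_mono) (simp add: abs_mult mult_left_mono)
  also have "\<dots> = c"
    using assms(3) by (simp flip: sum_distrib_right)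
  finally show ?thesis .
qed

lemma soft_bellman_log_sum_exp:
  "soft_bellman P R \<gamma> lam Q (s, a)
     = R s a + \<gamma> * (\<Sum>s'\<in>UNIV. P s a s' * log_sum_exp lam (\<lambda>u. Q (s', u)))"
  by (simp add: soft_bellman_def log_sum_exp_def)

lemma abs_soft_bellman_diff_le:
  assumes "\<And>s a s'. 0 \<le> P s a s'" "\<And>s a. (\<Sum>s'\<in>UNIV. P s a s') = 1"
    and "0 \<le> \<gamma>" "0 < lam" "\<And>i. \<bar>X i - Y i\<bar> \<le> c"
  shows "\<bar>soft_bellman P R \<gamma> lam X i - soft_bellman P R \<gamma> lam Y i\<bar> \<le> \<gamma> * c"
proof -
  obtain s a where i: "i = (s, a)"
    by fastforce
  have "\<bar>\<Sum>s'\<in>UNIV. P s a s' * (log_sum_exp lam (\<lambda>u. X (s', u)) - log_sum_exp lam (\<lambda>u. Y (s', u)))\<bar> \<le> c"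
    using assms by (intro abs_stochastic_sum_le abs_log_sum_exp_diff_le) auto
  then show ?thesis
    using assms(3)
    by (simp add: i soft_bellman_log_sum_exp abs_mult mult_left_mono
        flip: right_diff_distrib sum_subtractf)
qed

lemma one_le_card_mul_Max:
  fixes w :: "'i::finite \<Rightarrow> real"
  assumes "(\<Sum>i\<in>UNIV. w i) = 1"
  shows "1 \<le> real CARD('i) * Max (range w)"
proof -
  have "(\<Sum>i\<in>UNIV. w i) \<le> (\<Sum>i\<in>(UNIV::'i set). Max (range w))"
    by (intro sum_mono) simp
  then show ?thesis
    using assms by simp
qed

lemma gamma_div_Min_le_gamma_pw:
  fixes w :: "'i::finite \<Rightarrow> real"
  assumes "0 \<le> \<gamma>" "\<And>i. 0 < w i" "(\<Sum>i\<in>UNIV. w i) = 1" "0 < p"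
  shows "\<gamma> / Min (range w) powr (1/p) \<le> gamma_pw \<gamma> p w"
proof -
  have "1 \<le> (real CARD('i) * Max (range w)) powr (1/p)"
    using one_le_card_mul_Max[OF assms(3)] assms(4) by (simp add: ge_one_powr_ge_zero)
  then have "\<gamma> \<le> \<gamma> * real CARD('i) powr (1/p) * Max (range w) powr (1/p)"
    using mult_left_mono[OF _ assms(1)] by (fastforce simp: powr_mult mult.assoc)
  then show ?thesis
    by (simp add: gamma_pw_def powr_divide divide_right_mono)
qed

lemma soft_bellman_wdist_contraction:
  fixes w :: "'s::finite \<times> 'a::finite \<Rightarrow> real"
  assumes "\<And>s a s'. 0 \<le> P s a s'" "\<And>s a. (\<Sum>s'\<in>UNIV. P s a s') = 1"
    and "0 \<le> \<gamma>" "0 < lam" "\<And>i. 0 < w i" "(\<Sum>i\<in>UNIV. w i) = 1" "0 < p"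
  shows "wdist p w (soft_bellman P R \<gamma> lam X) (soft_bellman P R \<gamma> lam Y)
           \<le> gamma_pw \<gamma> p w * wdist p w X Y"
proof -
  define m where "m = Min (range w) powr (1/p)"
  have "Min (range w) \<in> range w"
    by (intro Min_in) auto
  then obtain j where "Min (range w) = w j"
    by blast
  then have Min_pos: "0 < Min (range w)"
    using assms(5) by metis
  then have m: "0 < m"
    unfolding m_def by (metis powr_gt_zero less_irrefl)
  have sup: "\<bar>X i - Y i\<bar> \<le> wdist p w X Y / m" for i
  proof -
    have "m * \<bar>X i - Y i\<bar> \<le> w i powr (1/p) * \<bar>X i - Y i\<bar>"
      unfolding m_def using assms(7) by (intro mult_right_mono powr_mono2 less_imp_le[OF Min_pos]) auto
    also have "\<dots> \<le> wdist p w X Y"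
      unfolding wdist_def using assms(5,7) by (intro abs_le_wnorm) (auto simp: less_imp_le)
    finally show ?thesis
      using m by (simp add: field_simps)
  qed
  have "wdist p w (soft_bellman P R \<gamma> lam X) (soft_bellman P R \<gamma> lam Y) \<le> \<gamma> * (wdist p w X Y / m)"
    using assms sup unfolding wdist_def
    by (intro wnorm_le_sup abs_soft_bellman_diff_le) (auto simp: less_imp_le)
  also have "\<dots> = \<gamma> / m * wdist p w X Y"
    by simp
  also have "\<dots> \<le> gamma_pw \<gamma> p w * wdist p w X Y"
    using gamma_div_Min_le_gamma_pw[of \<gamma> w p] assms unfolding m_def
    by (intro mult_right_mono) (simp_all add: wdist_def wnorm_nonneg)
  finally show ?thesis .
qed

lemma f_obj_minimizer_residual_le:
  assumes "0 < p" "\<And>\<theta>. f_obj P R \<gamma> lam p w \<Phi> \<theta>\<^sub>0 \<le> f_obj P R \<gamma> lam p w \<Phi> \<theta>"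
  shows "wdist p w (soft_bellman P R \<gamma> lam (linQ \<Phi> \<theta>\<^sub>0)) (linQ \<Phi> \<theta>\<^sub>0)
           \<le> wdist p w (soft_bellman P R \<gamma> lam (linQ \<Phi> \<theta>)) (linQ \<Phi> \<theta>)"
proof (rule powr_le_imp_le_base[OF assms(1)])
  show "wdist p w (soft_bellman P R \<gamma> lam (linQ \<Phi> \<theta>\<^sub>0)) (linQ \<Phi> \<theta>\<^sub>0) powr p
      \<le> wdist p w (soft_bellman P R \<gamma> lam (linQ \<Phi> \<theta>)) (linQ \<Phi> \<theta>) powr p"
    using assms(2)[of \<theta>] assms(1) by (simp add: f_obj_def wdist_def divide_le_cancel)
qed (simp add: wdist_def wnorm_nonneg)

theorem theorem1:
  fixes P :: "'s::finite \<Rightarrow> 'a::finite \<Rightarrow> 's \<Rightarrow> real"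
    and R :: "'s \<Rightarrow> 'a \<Rightarrow> real"
    and w :: "'s \<times> 'a \<Rightarrow> real"
    and \<Phi> :: "'s \<times> 'a \<Rightarrow> 'd::finite \<Rightarrow> real"
    and \<gamma> lam p :: real
    and Qstar :: "'s \<times> 'a \<Rightarrow> real"
    and \<theta>star :: "'d \<Rightarrow> real"
  assumes P_nonneg: "\<And>s a s'. P s a s' \<ge> 0"
    and P_sum: "\<And>s a. (\<Sum>s'\<in>UNIV. P s a s') = 1"
    and gamma: "0 \<le> \<gamma>" "\<gamma> < 1"
    and lam: "lam > 0"
    and w_pos: "\<And>i. w i > 0"
    and w_sum: "(\<Sum>i\<in>UNIV. w i) = 1"
    and full_rank: "\<And>\<theta>. linQ \<Phi> \<theta> = (\<lambda>_. 0) \<Longrightarrow> \<theta> = (\<lambda>_. 0)"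
    and p: "1 < p"
    and contr: "gamma_pw \<gamma> p w < 1"
    and fixpt: "soft_bellman P R \<gamma> lam Qstar = Qstar"
    and argmin: "\<And>\<theta>. f_obj P R \<gamma> lam p w \<Phi> \<theta>star \<le> f_obj P R \<gamma> lam p w \<Phi> \<theta>"
  shows "wnorm p w (\<lambda>i. linQ \<Phi> \<theta>star i - Qstar i)
           \<le> (1 + gamma_pw \<gamma> p w) / (1 - gamma_pw \<gamma> p w)
              * (INF \<theta>. wnorm p w (\<lambda>i. linQ \<Phi> \<theta> i - Qstar i))"
proof -
  define c where "c = (1 + gamma_pw \<gamma> p w) / (1 - gamma_pw \<gamma> p w)"
  interpret Metric_space UNIV "wdist p w"
    using p by (intro Metric_space_wdist[OF w_pos]) simp
  have contraction: "wdist p w (soft_bellman P R \<gamma> lam X) (soft_bellman P R \<gamma> lam Y)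
      \<le> gamma_pw \<gamma> p w * wdist p w X Y" for X Y
    using p by (intro soft_bellman_wdist_contraction[OF P_nonneg P_sum gamma(1) lam w_pos w_sum]) simp
  have residual_min: "wdist p w (soft_bellman P R \<gamma> lam (linQ \<Phi> \<theta>star)) (linQ \<Phi> \<theta>star)
      \<le> wdist p w (soft_bellman P R \<gamma> lam x) x" if "x \<in> range (linQ \<Phi>)" for x
    using that f_obj_minimizer_residual_le[of p, OF _ argmin] p by auto
  have bound: "wdist p w (linQ \<Phi> \<theta>star) Qstar \<le> c * wdist p w (linQ \<Phi> \<theta>) Qstar" for \<theta>
    unfolding c_def
    by (rule residual_minimizer_dist_le[where F = "soft_bellman P R \<gamma> lam" and S = "range (linQ \<Phi>)"])
      (use contraction contr fixpt residual_min in auto)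
  have "0 \<le> gamma_pw \<gamma> p w"
    unfolding gamma_pw_def using gamma(1) by (intro mult_nonneg_nonneg) auto
  then have "0 < c"
    using contr by (simp add: c_def)
  then have "wdist p w (linQ \<Phi> \<theta>star) Qstar / c \<le> (INF \<theta>. wdist p w (linQ \<Phi> \<theta>) Qstar)"
    using bound by (intro cINF_greatest) (simp_all add: pos_divide_le_eq mult.commute)
  then have "wdist p w (linQ \<Phi> \<theta>star) Qstar \<le> c * (INF \<theta>. wdist p w (linQ \<Phi> \<theta>) Qstar)"
    using \<open>0 < c\<close> by (simp add: pos_divide_le_eq mult.commute)
  then show ?thesis
    by (simp only: c_def wdist_def)
qed

end
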